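(* For all positive integers $b_1,\dots,b_k$, $$\operatorname{op}_{[b_1,\dots,b_k]}(123)=\operatorname{op}_{[b_1,\dots,b_k]}(132).$$
   Context: An ordered set partition of $[N]$ into $k$ blocks is a sequence $B_1/B_2/\cdots/B_k$ of nonempty, pairwise disjoint subsets of $[N]$ whose union is $[N]$; the order of the blocks matters, but not the order of elements within a block. For a permutation $\rho=\rho_1\cdots\rho_m\in\mathcal{S}_m$, an ordered partition $B_1/\cdots/B_k$ contains $\rho$ if there are block indices $i_1<i_2<\cdots<i_m$ and elements $b_j\in B_{i_j}$ such that $b_1\cdots b_m$ is order-isomorphic to $\rho$ (i.e. $b_a<b_c$ iff $\rho_a<\rho_c$); otherwise it avoids $\rho$. For positive integers $b_1,\dots,b_k$, $\operatorname{op}_{[b_1,\dots,b_k]}(\rho)$ is the number of $\rho$-avoiding ordered partitions $B_1/\cdots/B_k$ of $[b_1+\cdots+b_k]$ with $|B_i|=b_i$ for all $i$. *)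

theory Defs
  imports Main
begin

definition ordered_set_partition :: "nat \<Rightarrow> nat set list \<Rightarrow> bool" where
  "ordered_set_partition N Bs \<longleftrightarrow>
     (\<forall>i < length Bs. Bs ! i \<noteq> {}) \<and>
     (\<forall>i < length Bs. \<forall>j < length Bs. i \<noteq> j \<longrightarrow> Bs ! i \<inter> Bs ! j = {}) \<and>
     \<Union> (set Bs) = {1..N}"

text \<open>Pattern containment: rho is a permutation in one-line notation, given as the list
  [rho_1, ..., rho_m].\<close>
definition contains_pattern :: "nat set list \<Rightarrow> nat list \<Rightarrow> bool" where
  "contains_pattern Bs rho \<longleftrightarrow>
     (\<exists>idx :: nat \<Rightarrow> nat. \<exists>x :: nat \<Rightarrow> nat.
        (\<forall>j. Suc j < length rho \<longrightarrow> idx j < idx (Suc j)) \<and>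
        (\<forall>j < length rho. idx j < length Bs \<and> x j \<in> Bs ! (idx j)) \<and>
        (\<forall>a < length rho. \<forall>c < length rho. x a < x c \<longleftrightarrow> rho ! a < rho ! c))"

definition avoids_pattern :: "nat set list \<Rightarrow> nat list \<Rightarrow> bool" where
  "avoids_pattern Bs rho \<longleftrightarrow> \<not> contains_pattern Bs rho"

definition op_count :: "nat list \<Rightarrow> nat list \<Rightarrow> nat" where
  "op_count b rho = card {Bs. ordered_set_partition (sum_list b) Bs \<and>
                             map card Bs = b \<and> avoids_pattern Bs rho}"

end

theory Submission
  imports Defs "HOL-Library.Multiset"
begin

text \<open>
  An ordered partition B_0/.../B_(k-1) of [N] is encoded by the word w on the positions 1..N
  with w v = i for v in B_i; the block sizes fix the multiset of letters of w, and the partition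
  contains 123 (resp. 132) iff the word does. For words this is the Simion--Schmidt argument.
  An occurrence of either pattern may be assumed to start at a left-to-right minimum, so
  avoidance only constrains the letters at the remaining positions q, each of which must exceed
  the minimum m(q) of the letters before q. Keeping the left-to-right minima and their letters
  fixed, the remaining letters can be placed in exactly one way avoiding 123 (weakly decreasing)
  and in exactly one way avoiding 132 (from left to right, each position receives the smallest
  remaining letter above m(q)). So both classes of avoiders meet every fibre of this data exactly
  once and are equinumerous.
\<close>

subsection \<open>Rearranging values above a threshold\<close>

lemma antimono_on_iff_less:
  fixes f :: "'a::order \<Rightarrow> 'b::preorder"
  shows "antimono_on A f \<longleftrightarrow> (\<forall>x\<in>A. \<forall>y\<in>A. x < y \<longrightarrow> f y \<le> f x)"
  by (auto simp: monotone_on_def order_le_less)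

lemma count_image_mset_mset_set:
  "finite A \<Longrightarrow> count (image_mset f (mset_set A)) y = card {x\<in>A. f x = y}"
  by (simp add: count_image_mset Int_def conj_commute)

lemma image_eq_if_image_mset_eq:
  "image_mset f (mset_set A) = image_mset g (mset_set A) \<Longrightarrow> finite A \<Longrightarrow> f ` A = g ` A"
  by (metis finite_set_mset_mset_set set_image_mset)

lemma image_mset_mset_set_eq_iff_on_subset:
  assumes "finite S" "Q \<subseteq> S" "\<forall>x\<in>S - Q. f x = g x"
  shows "image_mset f (mset_set S) = image_mset g (mset_set S) \<longleftrightarrow>
         image_mset f (mset_set Q) = image_mset g (mset_set Q)"
proof -
  have "S = (S - Q) \<union> Q" using assms(2) by blast
  then have "mset_set S = mset_set (S - Q) + mset_set Q"
    using assms(1,2) mset_set_Union[of "S - Q" Q] finite_subset[OF assms(2)] by auto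
  moreover have "image_mset f (mset_set (S - Q)) = image_mset g (mset_set (S - Q))"
    using assms(1,3) by (intro image_mset_cong) auto
  ultimately show ?thesis by simp
qed

lemma image_mset_update_at_min:
  assumes "finite A" "b \<notin> A" "p \<in> insert b A"
    and "image_mset g (mset_set A) = image_mset (g0(p := g0 b)) (mset_set A)"
  shows "image_mset (g(b := g0 p)) (mset_set (insert b A)) = image_mset g0 (mset_set (insert b A))"
proof -
  have upd: "image_mset (g(b := x)) (mset_set A) = image_mset g (mset_set A)" for x
    using assms(1,2) by (intro image_mset_cong) auto
  show ?thesis
  proof (cases "p = b")
    case True
    then show ?thesis using assms upd by simp
  next
    case False
    then have pA: "p \<in> A" using assms(3) by simp
    have "image_mset (g(b := g0 p)) (mset_set (insert b A)) =
          add_mset (g0 p) (image_mset g (mset_set A))"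
      using assms(1,2) upd by simp
    also have "\<dots> = add_mset (g0 p) (add_mset (g0 b) (image_mset g0 (mset_set (A - {p}))))"
    proof -
      have "image_mset (g0(p := g0 b)) (mset_set (A - {p})) = image_mset g0 (mset_set (A - {p}))"
        using assms(1) by (intro image_mset_cong) auto
      then show ?thesis using assms(1,4) pA by (simp add: mset_set.remove)
    qed
    also have "\<dots> = image_mset g0 (mset_set (insert b A))"
      using assms(1,2) pA by (simp add: mset_set.remove add_mset_commute)
    finally show ?thesis .
  qed
qed

lemma threshold_update_at_min:
  fixes th g0 :: "'a \<Rightarrow> 'b::order"
  assumes "\<forall>q\<in>A. th q \<le> th b" "\<forall>q\<in>insert b A. th q < g0 q"
  shows "\<forall>q\<in>A. th q < (g0(p := g0 b)) q"
proof
  fix q assume "q \<in> A"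
  then show "th q < (g0(p := g0 b)) q"
    using assms by (cases "q = p") (auto intro: order.strict_trans1)
qed

lemma antimono_rearrangement_exists:
  fixes th g0 :: "'a::linorder \<Rightarrow> 'b::linorder"
  assumes "finite Q" "antimono_on Q th" "\<forall>q\<in>Q. th q < g0 q"
  shows "\<exists>g. image_mset g (mset_set Q) = image_mset g0 (mset_set Q) \<and> (\<forall>q\<in>Q. th q < g q) \<and>
             antimono_on Q g"
  using assms
proof (induction Q arbitrary: g0 rule: finite_linorder_min_induct)
  case empty
  then show ?case by auto
next
  case (insert b A)
  have bA: "b \<notin> A" using insert.hyps(2) by blast
  have th_b: "\<forall>q\<in>A. th q \<le> th b"
    using insert.prems(1) insert.hyps(2) by (auto simp: antimono_on_iff_less)
  define M where "M = Max (g0 ` insert b A)"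
  have M_max: "g0 q \<le> M" if "q \<in> insert b A" for q
    unfolding M_def using insert.hyps(1) that by (intro Max_ge) auto
  have "M \<in> g0 ` insert b A" unfolding M_def using insert.hyps(1) by (intro Max_in) auto
  then obtain p where p: "p \<in> insert b A" "g0 p = M" by blast
  obtain g where g: "image_mset g (mset_set A) = image_mset (g0(p := g0 b)) (mset_set A)"
      "\<forall>q\<in>A. th q < g q" "antimono_on A g"
    using insert.IH[OF monotone_on_subset[OF insert.prems(1) subset_insertI]
        threshold_update_at_min[OF th_b insert.prems(2)]]
    by blast
  have "g ` A \<subseteq> g0 ` insert b A"
    using image_eq_if_image_mset_eq[OF g(1) insert.hyps(1)] p(1) by auto
  then have g_le_M: "\<forall>q\<in>A. g q \<le> M" using M_max by fastforce
  show ?case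
  proof (intro exI conjI)
    show "image_mset (g(b := M)) (mset_set (insert b A)) = image_mset g0 (mset_set (insert b A))"
      using image_mset_update_at_min[OF insert.hyps(1) bA p(1) g(1)] p(2) by simp
    show "\<forall>q\<in>insert b A. th q < (g(b := M)) q"
      using g(2) bA M_max[of b] insert.prems(2) by auto
    show "antimono_on (insert b A) (g(b := M))"
      using g(3) g_le_M bA insert.hyps(2) by (auto simp: antimono_on_iff_less)
  qed
qed

lemma antimono_rearrangement_unique:
  fixes g1 g2 :: "'a::linorder \<Rightarrow> 'b::linorder"
  assumes "finite Q" "image_mset g1 (mset_set Q) = image_mset g2 (mset_set Q)"
    and "antimono_on Q g1" "antimono_on Q g2"
  shows "\<forall>q\<in>Q. g1 q = g2 q"
  using assms
proof (induction Q rule: finite_linorder_min_induct)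
  case empty
  then show ?case by simp
next
  case (insert b A)
  have bA: "b \<notin> A" using insert.hyps(2) by blast
  have img: "g1 ` insert b A = g2 ` insert b A"
    using image_eq_if_image_mset_eq[OF insert.prems(1)] insert.hyps(1) by simp
  have "g2 b \<in> g1 ` insert b A" "g1 b \<in> g2 ` insert b A" using img by (metis imageI insertI1)+
  then obtain q r where q: "q \<in> insert b A" "g2 b = g1 q" and r: "r \<in> insert b A" "g1 b = g2 r"
    by blast
  have "g1 q \<le> g1 b" "g2 r \<le> g2 b"
    using q(1) r(1) insert.prems(2,3) insert.hyps(2) by (auto simp: antimono_on_iff_less)
  then have b: "g1 b = g2 b" using q(2) r(2) by simp
  then have "image_mset g1 (mset_set A) = image_mset g2 (mset_set A)"
    using insert.prems(1) insert.hyps(1) bA by simp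
  then have "\<forall>q\<in>A. g1 q = g2 q"
    using insert.IH insert.prems(2,3) monotone_on_subset by blast
  then show ?case using b by simp
qed

definition bounded_descents :: "'a::ord set \<Rightarrow> ('a \<Rightarrow> 'b::ord) \<Rightarrow> ('a \<Rightarrow> 'b) \<Rightarrow> bool" where
  "bounded_descents Q th g \<longleftrightarrow> (\<forall>q1\<in>Q. \<forall>q2\<in>Q. q1 < q2 \<longrightarrow> g q2 < g q1 \<longrightarrow> g q2 \<le> th q1)"

lemma bounded_descents_rearrangement_exists:
  fixes th g0 :: "'a::linorder \<Rightarrow> 'b::linorder"
  assumes "finite Q" "antimono_on Q th" "\<forall>q\<in>Q. th q < g0 q"
  shows "\<exists>g. image_mset g (mset_set Q) = image_mset g0 (mset_set Q) \<and> (\<forall>q\<in>Q. th q < g q) \<and>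
             bounded_descents Q th g"
  using assms
proof (induction Q arbitrary: g0 rule: finite_linorder_min_induct)
  case empty
  then show ?case by (auto simp: bounded_descents_def)
next
  case (insert b A)
  have bA: "b \<notin> A" using insert.hyps(2) by blast
  have th_b: "\<forall>q\<in>A. th q \<le> th b"
    using insert.prems(1) insert.hyps(2) by (auto simp: antimono_on_iff_less)
  define S where "S = {x \<in> g0 ` insert b A. th b < x}"
  define M where "M = Min S"
  have S_fin: "finite S" unfolding S_def using insert.hyps(1) by simp
  have "g0 b \<in> S" unfolding S_def using insert.prems(2) by simp
  have M_min: "M \<le> x" if "x \<in> S" for x
    unfolding M_def using S_fin that by (rule Min_le)
  have "M \<in> S" unfolding M_def using S_fin \<open>g0 b \<in> S\<close> by (intro Min_in) auto
  then obtain p where p: "p \<in> insert b A" "g0 p = M" and th_M: "th b < M"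
    unfolding S_def by auto
  obtain g where g: "image_mset g (mset_set A) = image_mset (g0(p := g0 b)) (mset_set A)"
      "\<forall>q\<in>A. th q < g q" "bounded_descents A th g"
    using insert.IH[OF monotone_on_subset[OF insert.prems(1) subset_insertI]
        threshold_update_at_min[OF th_b insert.prems(2)]]
    by blast
  have "g ` A \<subseteq> g0 ` insert b A"
    using image_eq_if_image_mset_eq[OF g(1) insert.hyps(1)] p(1) by auto
  have below_M: "g q \<le> th b" if "q \<in> A" "g q < M" for q
  proof (rule ccontr)
    assume "\<not> g q \<le> th b"
    then have "g q \<in> S" unfolding S_def using \<open>g ` A \<subseteq> g0 ` insert b A\<close> that(1) by auto
    then show False using M_min that(2) by fastforce
  qed
  show ?case
  proof (intro exI conjI)
    show "image_mset (g(b := M)) (mset_set (insert b A)) = image_mset g0 (mset_set (insert b A))"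
      using image_mset_update_at_min[OF insert.hyps(1) bA p(1) g(1)] p(2) by simp
    show "\<forall>q\<in>insert b A. th q < (g(b := M)) q"
      using g(2) bA th_M by auto
    show "bounded_descents (insert b A) th (g(b := M))"
      unfolding bounded_descents_def
    proof (intro ballI impI)
      fix q1 q2 assume q: "q1 \<in> insert b A" "q2 \<in> insert b A" "q1 < q2"
        and descent: "(g(b := M)) q2 < (g(b := M)) q1"
      have "q2 \<in> A" "q2 \<noteq> b" using q insert.hyps(2) by fastforce+
      show "(g(b := M)) q2 \<le> th q1"
      proof (cases "q1 = b")
        case True
        then show ?thesis using below_M[OF \<open>q2 \<in> A\<close>] descent \<open>q2 \<noteq> b\<close> by simp
      next
        case False
        then have "q1 \<in> A" "g q2 < g q1" using q(1) descent \<open>q2 \<noteq> b\<close> by simp_all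
        then show ?thesis
          using g(3) q(3) \<open>q2 \<in> A\<close> \<open>q2 \<noteq> b\<close> unfolding bounded_descents_def by simp
      qed
    qed
  qed
qed

lemma bounded_descents_rearrangement_unique:
  fixes th g1 g2 :: "'a::linorder \<Rightarrow> 'b::linorder"
  assumes "finite Q" "image_mset g1 (mset_set Q) = image_mset g2 (mset_set Q)"
    and "\<forall>q\<in>Q. th q < g1 q" "\<forall>q\<in>Q. th q < g2 q"
    and "bounded_descents Q th g1" "bounded_descents Q th g2"
  shows "\<forall>q\<in>Q. g1 q = g2 q"
  using assms
proof (induction Q rule: finite_linorder_min_induct)
  case empty
  then show ?case by simp
next
  case (insert b A)
  have bA: "b \<notin> A" using insert.hyps(2) by blast
  have img: "g1 ` insert b A = g2 ` insert b A"
    using image_eq_if_image_mset_eq[OF insert.prems(1)] insert.hyps(1) by simp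
  have not_less: "\<not> h2 b < h1 b"
    if "h1 ` insert b A = h2 ` insert b A" "\<forall>q\<in>insert b A. th q < h2 q"
      "bounded_descents (insert b A) th h1" for h1 h2 :: "'a \<Rightarrow> 'b"
  proof
    assume lt: "h2 b < h1 b"
    have "h2 b \<in> h1 ` insert b A" using that(1) by simp
    then obtain q where q: "q \<in> insert b A" "h2 b = h1 q" by blast
    have "b < q" using q lt insert.hyps(2) by (cases "q = b") auto
    moreover have "h1 q < h1 b" using q(2) lt by simp
    ultimately have "h1 q \<le> th b" using that(3) q(1) unfolding bounded_descents_def by blast
    then show False using q(2) that(2) by (simp add: not_le[symmetric])
  qed
  have "\<not> g2 b < g1 b" using not_less[OF img insert.prems(3,4)] .
  moreover have "\<not> g1 b < g2 b" using not_less[OF img[symmetric] insert.prems(2,5)] .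
  ultimately have b: "g1 b = g2 b" by simp
  then have "image_mset g1 (mset_set A) = image_mset g2 (mset_set A)"
    using insert.prems(1) insert.hyps(1) bA by simp
  moreover have "\<forall>q\<in>A. th q < g1 q" "\<forall>q\<in>A. th q < g2 q"
    using insert.prems(2,3) by simp_all
  moreover have "bounded_descents A th g1" "bounded_descents A th g2"
    using insert.prems(4,5) unfolding bounded_descents_def by simp_all
  ultimately have "\<forall>q\<in>A. g1 q = g2 q" by (rule insert.IH)
  then show ?case using b by simp
qed

subsection \<open>Left-to-right minima\<close>

definition ltr_min :: "(nat \<Rightarrow> 'b::linorder) \<Rightarrow> nat \<Rightarrow> bool" where
  "ltr_min w v \<longleftrightarrow> (\<forall>u\<in>{1..<v}. w v \<le> w u)"

text \<open>prefix_min w q is unspecified for q \<le> 1 (Min of the empty set), hence the guards 2 \<le> q below.\<close>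

definition prefix_min :: "(nat \<Rightarrow> 'b::linorder) \<Rightarrow> nat \<Rightarrow> 'b" where
  "prefix_min w q = Min (w ` {1..<q})"

definition non_ltr_minima :: "nat \<Rightarrow> (nat \<Rightarrow> 'b::linorder) \<Rightarrow> nat set" where
  "non_ltr_minima N w = {v\<in>{1..N}. \<not> ltr_min w v}"

definition ltr_min_mask :: "nat \<Rightarrow> (nat \<Rightarrow> 'b::linorder) \<Rightarrow> nat \<Rightarrow> 'b option" where
  "ltr_min_mask N w v = (if v \<in> {1..N} \<and> ltr_min w v then Some (w v) else None)"

lemma prefix_min_le: "u \<in> {1..<q} \<Longrightarrow> prefix_min w q \<le> w u"
  unfolding prefix_min_def by (intro Min_le) auto

lemma prefix_min_antimono: "2 \<le> q1 \<Longrightarrow> q1 \<le> q2 \<Longrightarrow> prefix_min w q2 \<le> prefix_min w q1"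
  unfolding prefix_min_def by (intro Min_antimono) auto

lemma not_ltr_min_iff: "1 \<le> q \<Longrightarrow> \<not> ltr_min w q \<longleftrightarrow> 2 \<le> q \<and> prefix_min w q < w q"
proof
  assume "1 \<le> q" "\<not> ltr_min w q"
  then obtain u where u: "u \<in> {1..<q}" "w u < w q" unfolding ltr_min_def by auto
  then show "2 \<le> q \<and> prefix_min w q < w q" using prefix_min_le[OF u(1), of w] by auto
next
  assume "2 \<le> q \<and> prefix_min w q < w q"
  then have "{1..<q} \<noteq> {}" "Min (w ` {1..<q}) < w q" by (auto simp: prefix_min_def)
  then obtain u where "u \<in> {1..<q}" "w u < w q" by (subst (asm) Min_less_iff) auto
  then show "\<not> ltr_min w q" unfolding ltr_min_def by (meson not_le)
qed

lemma prefix_min_attained: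
  assumes "2 \<le> q"
  obtains u where "u \<in> {1..<q}" "ltr_min w u" "w u = prefix_min w q"
proof -
  define U where "U = {u\<in>{1..<q}. w u = prefix_min w q}"
  have "prefix_min w q \<in> w ` {1..<q}" unfolding prefix_min_def using assms by (intro Min_in) auto
  then have "U \<noteq> {}" unfolding U_def by auto
  then have "Min U \<in> U" unfolding U_def by (intro Min_in) auto
  moreover have "ltr_min w (Min U)"
    unfolding ltr_min_def
  proof
    fix u assume "u \<in> {1..<Min U}"
    then have "u \<in> {1..<q}" using \<open>Min U \<in> U\<close> unfolding U_def by auto
    then show "w (Min U) \<le> w u" using prefix_min_le \<open>Min U \<in> U\<close> unfolding U_def by auto
  qed
  ultimately show ?thesis using that unfolding U_def by blast
qed

lemma non_ltr_minima_subset: "non_ltr_minima N w \<subseteq> {1..N}"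
  unfolding non_ltr_minima_def by auto

lemma finite_non_ltr_minima: "finite (non_ltr_minima N w)"
  using finite_subset[OF non_ltr_minima_subset] by blast

lemma non_ltr_minima_iff: "q \<in> non_ltr_minima N w \<longleftrightarrow> q \<in> {1..N} \<and> 2 \<le> q \<and> prefix_min w q < w q"
  unfolding non_ltr_minima_def using not_ltr_min_iff by auto

lemma antimono_on_prefix_min: "antimono_on (non_ltr_minima N w) (prefix_min w)"
  by (auto simp: antimono_on_iff_less non_ltr_minima_iff intro: prefix_min_antimono)

lemma ltr_min_mask_eqD:
  assumes mask: "ltr_min_mask N w' = ltr_min_mask N w"
  shows "non_ltr_minima N w' = non_ltr_minima N w"
    and "\<forall>q\<in>non_ltr_minima N w. prefix_min w' q = prefix_min w q \<and> prefix_min w q < w' q"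
    and "\<forall>v\<in>{1..N} - non_ltr_minima N w. w' v = w v"
proof -
  have ltr_iff: "ltr_min w' v \<longleftrightarrow> ltr_min w v" if "v \<in> {1..N}" for v
    using fun_cong[OF mask, of v] that unfolding ltr_min_mask_def by (auto split: if_splits)
  have same: "w' v = w v" if "v \<in> {1..N}" "ltr_min w v" for v
    using fun_cong[OF mask, of v] that unfolding ltr_min_mask_def by (auto split: if_splits)
  show "non_ltr_minima N w' = non_ltr_minima N w" unfolding non_ltr_minima_def using ltr_iff by auto
  show "\<forall>v\<in>{1..N} - non_ltr_minima N w. w' v = w v" using same unfolding non_ltr_minima_def by auto
  have prefix_eq: "prefix_min w' q = prefix_min w q" if q: "q \<in> {1..N}" "2 \<le> q" for q
  proof -
    obtain u where u: "u \<in> {1..<q}" "ltr_min w u" "w u = prefix_min w q"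
      using prefix_min_attained[OF q(2)] .
    obtain u' where u': "u' \<in> {1..<q}" "ltr_min w' u'" "w' u' = prefix_min w' q"
      using prefix_min_attained[OF q(2)] .
    have "u \<in> {1..N}" "u' \<in> {1..N}" using u(1) u'(1) q(1) by auto
    then have "w' u = w u" "w' u' = w u'" using u(2) u'(2) ltr_iff[of u'] same by auto
    then show ?thesis using prefix_min_le[OF u(1), of w'] prefix_min_le[OF u'(1), of w] u u' by simp
  qed
  show "\<forall>q\<in>non_ltr_minima N w. prefix_min w' q = prefix_min w q \<and> prefix_min w q < w' q"
  proof
    fix q assume q: "q \<in> non_ltr_minima N w"
    then have "q \<in> non_ltr_minima N w'" using ltr_iff unfolding non_ltr_minima_def by auto
    then show "prefix_min w' q = prefix_min w q \<and> prefix_min w q < w' q"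
      using prefix_eq q unfolding non_ltr_minima_iff by auto
  qed
qed

lemma ltr_min_mask_eqI:
  assumes same: "\<forall>v\<in>{1..N} - non_ltr_minima N w. w' v = w v"
    and above: "\<forall>q\<in>non_ltr_minima N w. prefix_min w q < w' q"
  shows "ltr_min_mask N w' = ltr_min_mask N w"
proof -
  have ltr_iff: "ltr_min w' v \<longleftrightarrow> ltr_min w v" if v: "v \<in> {1..N}" for v
  proof
    assume ltr: "ltr_min w v"
    then have wv: "w' v = w v" using same v unfolding non_ltr_minima_def by auto
    show "ltr_min w' v" unfolding ltr_min_def
    proof
      fix u assume u: "u \<in> {1..<v}"
      show "w' v \<le> w' u"
      proof (cases "ltr_min w u")
        case True
        then have "w' u = w u" using same u v unfolding non_ltr_minima_def by auto
        then show ?thesis using ltr u wv unfolding ltr_min_def by auto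
      next
        case False
        then have "u \<in> non_ltr_minima N w" "2 \<le> u" using u v not_ltr_min_iff[of u w]
          unfolding non_ltr_minima_def by auto
        moreover obtain u0 where "u0 \<in> {1..<u}" "w u0 = prefix_min w u"
          using prefix_min_attained[OF \<open>2 \<le> u\<close>] by blast
        moreover have "w v \<le> w u0" using ltr \<open>u0 \<in> {1..<u}\<close> u unfolding ltr_min_def by auto
        ultimately show ?thesis using above wv by fastforce
      qed
    qed
  next
    assume ltr': "ltr_min w' v"
    show "ltr_min w v"
    proof (rule ccontr)
      assume "\<not> ltr_min w v"
      then have "v \<in> non_ltr_minima N w" "2 \<le> v"
        using v not_ltr_min_iff[of v w] unfolding non_ltr_minima_def by auto
      obtain u0 where u0: "u0 \<in> {1..<v}" "ltr_min w u0" "w u0 = prefix_min w v"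
        using prefix_min_attained[OF \<open>2 \<le> v\<close>] .
      have "w' u0 = w u0" using same u0 v unfolding non_ltr_minima_def by auto
      then have "w' u0 < w' v" using above \<open>v \<in> non_ltr_minima N w\<close> u0(3) by auto
      then show False using ltr' u0(1) unfolding ltr_min_def by fastforce
    qed
  qed
  show ?thesis
    using ltr_iff same unfolding ltr_min_mask_def non_ltr_minima_def by fastforce
qed

subsection \<open>Pattern avoidance in words\<close>

definition contains_123 :: "nat \<Rightarrow> (nat \<Rightarrow> 'b::linorder) \<Rightarrow> bool" where
  "contains_123 N w \<longleftrightarrow> (\<exists>p q r. 1 \<le> p \<and> p < q \<and> q < r \<and> r \<le> N \<and> w p < w q \<and> w q < w r)"

definition contains_132 :: "nat \<Rightarrow> (nat \<Rightarrow> 'b::linorder) \<Rightarrow> bool" where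
  "contains_132 N w \<longleftrightarrow> (\<exists>p q r. 1 \<le> p \<and> p < q \<and> q < r \<and> r \<le> N \<and> w p < w r \<and> w r < w q)"

text \<open>The 1 of either pattern can always be moved to a left-to-right minimum, so only the
  values at the other positions matter.\<close>

lemma not_contains_123_iff: "\<not> contains_123 N w \<longleftrightarrow> antimono_on (non_ltr_minima N w) w"
proof -
  have "contains_123 N w \<longleftrightarrow>
        (\<exists>q\<in>non_ltr_minima N w. \<exists>r\<in>non_ltr_minima N w. q < r \<and> w q < w r)"
  proof
    assume "contains_123 N w"
    then obtain p q r where pqr: "1 \<le> p" "p < q" "q < r" "r \<le> N" "w p < w q" "w q < w r"
      unfolding contains_123_def by blast
    then have "q \<in> non_ltr_minima N w" "r \<in> non_ltr_minima N w"
      unfolding non_ltr_minima_def ltr_min_def by (auto intro!: bexI[of _ p])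
    then show "\<exists>q\<in>non_ltr_minima N w. \<exists>r\<in>non_ltr_minima N w. q < r \<and> w q < w r"
      using pqr by blast
  next
    assume "\<exists>q\<in>non_ltr_minima N w. \<exists>r\<in>non_ltr_minima N w. q < r \<and> w q < w r"
    then obtain q r where qr: "q \<in> non_ltr_minima N w" "r \<in> non_ltr_minima N w" "q < r" "w q < w r"
      by blast
    then obtain p where "p \<in> {1..<q}" "w p < w q"
      unfolding non_ltr_minima_def ltr_min_def by (auto simp: not_le)
    then show "contains_123 N w"
      using qr non_ltr_minima_subset unfolding contains_123_def by fastforce
  qed
  then show ?thesis unfolding antimono_on_iff_less by (meson not_le)
qed

lemma not_contains_132_iff:
  "\<not> contains_132 N w \<longleftrightarrow> bounded_descents (non_ltr_minima N w) (prefix_min w) w"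
proof -
  have "contains_132 N w \<longleftrightarrow>
        (\<exists>q\<in>non_ltr_minima N w. \<exists>r\<in>non_ltr_minima N w. q < r \<and> w r < w q \<and> prefix_min w q < w r)"
  proof
    assume "contains_132 N w"
    then obtain p q r where pqr: "1 \<le> p" "p < q" "q < r" "r \<le> N" "w p < w r" "w r < w q"
      unfolding contains_132_def by blast
    then have "q \<in> non_ltr_minima N w" "r \<in> non_ltr_minima N w"
      unfolding non_ltr_minima_def ltr_min_def by (auto intro!: bexI[of _ p])
    moreover have "prefix_min w q \<le> w p" using pqr by (intro prefix_min_le) auto
    ultimately show "\<exists>q\<in>non_ltr_minima N w. \<exists>r\<in>non_ltr_minima N w.
                       q < r \<and> w r < w q \<and> prefix_min w q < w r"
      using pqr by force
  next
    assume "\<exists>q\<in>non_ltr_minima N w. \<exists>r\<in>non_ltr_minima N w. q < r \<and> w r < w q \<and> prefix_min w q < w r"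
    then obtain q r where qr: "q \<in> non_ltr_minima N w" "r \<in> non_ltr_minima N w" "q < r"
        "w r < w q" "prefix_min w q < w r"
      by blast
    then have "2 \<le> q" by (simp add: non_ltr_minima_iff)
    then obtain p where "p \<in> {1..<q}" "w p = prefix_min w q"
      using prefix_min_attained by blast
    then show "contains_132 N w"
      using qr non_ltr_minima_subset unfolding contains_132_def by fastforce
  qed
  then show ?thesis unfolding bounded_descents_def by (meson not_le)
qed

definition words :: "nat \<Rightarrow> nat multiset \<Rightarrow> (nat \<Rightarrow> nat) set" where
  "words N M = {w. (\<forall>v. v \<notin> {1..N} \<longrightarrow> w v = 0) \<and> image_mset w (mset_set {1..N}) = M}"

lemma words_eqI:
  assumes "w1 \<in> words N M" "w2 \<in> words N M" "\<forall>v\<in>{1..N}. w1 v = w2 v"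
  shows "w1 = w2"
proof
  fix v show "w1 v = w2 v" using assms unfolding words_def by (cases "v \<in> {1..N}") auto
qed

lemma image_mset_non_ltr_minima_eq:
  assumes "w1 \<in> words N M" "w2 \<in> words N M" "\<forall>v\<in>{1..N} - non_ltr_minima N w. w1 v = w2 v"
  shows "image_mset w1 (mset_set (non_ltr_minima N w)) = image_mset w2 (mset_set (non_ltr_minima N w))"
  using image_mset_mset_set_eq_iff_on_subset[OF _ non_ltr_minima_subset assms(3)] assms(1,2)
  unfolding words_def by simp

lemma rearrange_non_ltr_minima:
  assumes w: "w \<in> words N M"
    and g: "image_mset g (mset_set (non_ltr_minima N w)) = image_mset w (mset_set (non_ltr_minima N w))"
    and above: "\<forall>q\<in>non_ltr_minima N w. prefix_min w q < g q"
  defines "w' \<equiv> \<lambda>v. if v \<in> non_ltr_minima N w then g v else w v"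
  shows "w' \<in> words N M" "ltr_min_mask N w' = ltr_min_mask N w"
proof -
  have same: "\<forall>v\<in>{1..N} - non_ltr_minima N w. w' v = w v" by (simp add: w'_def)
  show "ltr_min_mask N w' = ltr_min_mask N w"
    using same above by (intro ltr_min_mask_eqI) (auto simp: w'_def)
  have "image_mset w' (mset_set (non_ltr_minima N w)) = image_mset g (mset_set (non_ltr_minima N w))"
    using finite_non_ltr_minima[of N w] by (intro image_mset_cong) (auto simp: w'_def)
  then have "image_mset w' (mset_set {1..N}) = image_mset w (mset_set {1..N})"
    using image_mset_mset_set_eq_iff_on_subset[OF _ non_ltr_minima_subset same] g by simp
  moreover have "\<forall>v. v \<notin> {1..N} \<longrightarrow> w' v = 0"
    using w non_ltr_minima_subset[of N w] unfolding words_def w'_def by auto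
  ultimately show "w' \<in> words N M" using w unfolding words_def by simp
qed

lemma exists_not_contains_123_same_mask:
  assumes w: "w \<in> words N M"
  obtains w' where "w' \<in> words N M" "\<not> contains_123 N w'" "ltr_min_mask N w' = ltr_min_mask N w"
proof -
  let ?Q = "non_ltr_minima N w"
  obtain g where g: "image_mset g (mset_set ?Q) = image_mset w (mset_set ?Q)"
      "\<forall>q\<in>?Q. prefix_min w q < g q" "antimono_on ?Q g"
    using antimono_rearrangement_exists[OF finite_non_ltr_minima antimono_on_prefix_min]
      non_ltr_minima_iff by blast
  define w' where "w' = (\<lambda>v. if v \<in> ?Q then g v else w v)"
  have w': "w' \<in> words N M" "ltr_min_mask N w' = ltr_min_mask N w"
    using rearrange_non_ltr_minima[OF w g(1,2)] unfolding w'_def by simp_all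
  have "antimono_on ?Q w'" using g(3) unfolding monotone_on_def w'_def by simp
  then have "antimono_on (non_ltr_minima N w') w'" using ltr_min_mask_eqD(1)[OF w'(2)] by simp
  then show ?thesis using that w' not_contains_123_iff by blast
qed

lemma exists_not_contains_132_same_mask:
  assumes w: "w \<in> words N M"
  obtains w' where "w' \<in> words N M" "\<not> contains_132 N w'" "ltr_min_mask N w' = ltr_min_mask N w"
proof -
  let ?Q = "non_ltr_minima N w"
  obtain g where g: "image_mset g (mset_set ?Q) = image_mset w (mset_set ?Q)"
      "\<forall>q\<in>?Q. prefix_min w q < g q" "bounded_descents ?Q (prefix_min w) g"
    using bounded_descents_rearrangement_exists[OF finite_non_ltr_minima antimono_on_prefix_min]
      non_ltr_minima_iff by blast
  define w' where "w' = (\<lambda>v. if v \<in> ?Q then g v else w v)"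
  have w': "w' \<in> words N M" "ltr_min_mask N w' = ltr_min_mask N w"
    using rearrange_non_ltr_minima[OF w g(1,2)] unfolding w'_def by simp_all
  note fiber = ltr_min_mask_eqD[OF w'(2)]
  have "bounded_descents ?Q (prefix_min w') w'"
    using g(3) fiber(2) unfolding bounded_descents_def w'_def by simp
  then have "bounded_descents (non_ltr_minima N w') (prefix_min w') w'" using fiber(1) by simp
  then show ?thesis using that w' not_contains_132_iff by blast
qed

lemma not_contains_123_same_mask_unique:
  assumes w: "w1 \<in> words N M" "w2 \<in> words N M"
    and avoid: "\<not> contains_123 N w1" "\<not> contains_123 N w2"
    and mask: "ltr_min_mask N w1 = ltr_min_mask N w2"
  shows "w1 = w2"
proof -
  let ?Q = "non_ltr_minima N w2"
  note fiber = ltr_min_mask_eqD[OF mask]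
  have "\<forall>q\<in>?Q. w1 q = w2 q"
  proof (rule antimono_rearrangement_unique[OF finite_non_ltr_minima])
    show "image_mset w1 (mset_set ?Q) = image_mset w2 (mset_set ?Q)"
      using image_mset_non_ltr_minima_eq[OF w fiber(3)] .
    show "antimono_on ?Q w1" "antimono_on ?Q w2"
      using avoid not_contains_123_iff fiber(1) by metis+
  qed
  then show ?thesis using words_eqI[OF w] fiber(3) by blast
qed

lemma not_contains_132_same_mask_unique:
  assumes w: "w1 \<in> words N M" "w2 \<in> words N M"
    and avoid: "\<not> contains_132 N w1" "\<not> contains_132 N w2"
    and mask: "ltr_min_mask N w1 = ltr_min_mask N w2"
  shows "w1 = w2"
proof -
  let ?Q = "non_ltr_minima N w2"
  note fiber = ltr_min_mask_eqD[OF mask]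
  have "\<forall>q\<in>?Q. w1 q = w2 q"
  proof (rule bounded_descents_rearrangement_unique[OF finite_non_ltr_minima])
    show "image_mset w1 (mset_set ?Q) = image_mset w2 (mset_set ?Q)"
      using image_mset_non_ltr_minima_eq[OF w fiber(3)] .
    show "\<forall>q\<in>?Q. prefix_min w2 q < w1 q" using fiber(2) by simp
    show "\<forall>q\<in>?Q. prefix_min w2 q < w2 q" using non_ltr_minima_iff by blast
    show "bounded_descents ?Q (prefix_min w2) w2" using avoid(2) not_contains_132_iff by blast
    have "bounded_descents (non_ltr_minima N w1) (prefix_min w1) w1"
      using avoid(1) not_contains_132_iff by blast
    then show "bounded_descents ?Q (prefix_min w2) w1"
      using fiber(2) unfolding fiber(1) bounded_descents_def by simp
  qed
  then show ?thesis using words_eqI[OF w] fiber(3) by blast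
qed

lemma card_eq_if_transversals:
  assumes "A \<subseteq> S" "\<forall>x\<in>S. \<exists>y\<in>A. m y = m x" "inj_on m A"
    and "B \<subseteq> S" "\<forall>x\<in>S. \<exists>y\<in>B. m y = m x" "inj_on m B"
  shows "card A = card B"
proof -
  have "m ` A = m ` S" "m ` B = m ` S" using assms by (auto, metis imageI)+
  then show ?thesis using card_image[OF assms(3)] card_image[OF assms(6)] by simp
qed

theorem card_words_not_contains_123_eq_132:
  "card {w \<in> words N M. \<not> contains_123 N w} = card {w \<in> words N M. \<not> contains_132 N w}"
proof (rule card_eq_if_transversals[where S = "words N M" and m = "ltr_min_mask N"])
  show "\<forall>w\<in>words N M. \<exists>w'\<in>{w \<in> words N M. \<not> contains_123 N w}. ltr_min_mask N w' = ltr_min_mask N w"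
    by (metis (mono_tags, lifting) exists_not_contains_123_same_mask mem_Collect_eq)
  show "\<forall>w\<in>words N M. \<exists>w'\<in>{w \<in> words N M. \<not> contains_132 N w}. ltr_min_mask N w' = ltr_min_mask N w"
    by (metis (mono_tags, lifting) exists_not_contains_132_same_mask mem_Collect_eq)
  show "inj_on (ltr_min_mask N) {w \<in> words N M. \<not> contains_123 N w}"
    by (auto intro: inj_onI not_contains_123_same_mask_unique)
  show "inj_on (ltr_min_mask N) {w \<in> words N M. \<not> contains_132 N w}"
    by (auto intro: inj_onI not_contains_132_same_mask_unique)
qed auto

subsection \<open>Ordered set partitions as words\<close>

lemma contains_pattern_length3:
  "contains_pattern Bs [r0, r1, r2] \<longleftrightarrow>
   (\<exists>i0 i1 i2 x0 x1 x2. i0 < i1 \<and> i1 < i2 \<and> i2 < length Bs \<and>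
      x0 \<in> Bs ! i0 \<and> x1 \<in> Bs ! i1 \<and> x2 \<in> Bs ! i2 \<and>
      (x0 < x1 \<longleftrightarrow> r0 < r1) \<and> (x0 < x2 \<longleftrightarrow> r0 < r2) \<and> (x1 < x0 \<longleftrightarrow> r1 < r0) \<and>
      (x1 < x2 \<longleftrightarrow> r1 < r2) \<and> (x2 < x0 \<longleftrightarrow> r2 < r0) \<and> (x2 < x1 \<longleftrightarrow> r2 < r1))"
  (is "?lhs \<longleftrightarrow> ?rhs")
proof
  assume ?lhs
  then obtain idx x :: "nat \<Rightarrow> nat" where
    idx: "\<forall>j. Suc j < length [r0, r1, r2] \<longrightarrow> idx j < idx (Suc j)" and
    mem: "\<forall>j<length [r0, r1, r2]. idx j < length Bs \<and> x j \<in> Bs ! idx j" and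
    iso: "\<forall>a<length [r0, r1, r2]. \<forall>c<length [r0, r1, r2].
            x a < x c \<longleftrightarrow> [r0, r1, r2] ! a < [r0, r1, r2] ! c"
    unfolding contains_pattern_def by blast
  have "idx 0 < idx 1" "idx 1 < idx 2"
    using idx[rule_format, of 0] idx[rule_format, of 1] by (simp_all add: numeral_2_eq_2)
  moreover have "idx 2 < length Bs" "x 0 \<in> Bs ! idx 0" "x 1 \<in> Bs ! idx 1" "x 2 \<in> Bs ! idx 2"
    using mem[rule_format, of 0] mem[rule_format, of 1] mem[rule_format, of 2]
    by (simp_all add: numeral_2_eq_2)
  moreover have "x 0 < x 1 \<longleftrightarrow> r0 < r1" "x 0 < x 2 \<longleftrightarrow> r0 < r2" "x 1 < x 0 \<longleftrightarrow> r1 < r0"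
      "x 1 < x 2 \<longleftrightarrow> r1 < r2" "x 2 < x 0 \<longleftrightarrow> r2 < r0" "x 2 < x 1 \<longleftrightarrow> r2 < r1"
    using iso[rule_format, of 0 1] iso[rule_format, of 0 2] iso[rule_format, of 1 0]
      iso[rule_format, of 1 2] iso[rule_format, of 2 0] iso[rule_format, of 2 1]
    by (simp_all add: numeral_2_eq_2)
  ultimately show ?rhs by blast
next
  assume ?rhs
  then obtain i0 i1 i2 x0 x1 x2 where *: "i0 < i1" "i1 < i2" "i2 < length Bs"
      "x0 \<in> Bs ! i0" "x1 \<in> Bs ! i1" "x2 \<in> Bs ! i2"
      "x0 < x1 \<longleftrightarrow> r0 < r1" "x0 < x2 \<longleftrightarrow> r0 < r2" "x1 < x0 \<longleftrightarrow> r1 < r0"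
      "x1 < x2 \<longleftrightarrow> r1 < r2" "x2 < x0 \<longleftrightarrow> r2 < r0" "x2 < x1 \<longleftrightarrow> r2 < r1"
    by blast
  show ?lhs
    unfolding contains_pattern_def
    by (rule exI[of _ "nth [i0, i1, i2]"], rule exI[of _ "nth [x0, x1, x2]"])
       (use * in \<open>simp add: numeral_eq_Suc All_less_Suc\<close>)
qed

lemma contains_pattern_123:
  "contains_pattern Bs [1, 2, 3] \<longleftrightarrow>
   (\<exists>i0 i1 i2 x0 x1 x2. i0 < i1 \<and> i1 < i2 \<and> i2 < length Bs \<and>
      x0 \<in> Bs ! i0 \<and> x1 \<in> Bs ! i1 \<and> x2 \<in> Bs ! i2 \<and> x0 < x1 \<and> x1 < x2)"
proof -
  have iso: "((x0 < x1 \<longleftrightarrow> (1::nat) < 2) \<and> (x0 < x2 \<longleftrightarrow> (1::nat) < 3) \<and>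
      (x1 < x0 \<longleftrightarrow> (2::nat) < 1) \<and> (x1 < x2 \<longleftrightarrow> (2::nat) < 3) \<and>
      (x2 < x0 \<longleftrightarrow> (3::nat) < 1) \<and> (x2 < x1 \<longleftrightarrow> (3::nat) < 2)) \<longleftrightarrow> x0 < x1 \<and> x1 < x2"
    for x0 x1 x2 :: nat
    by auto
  show ?thesis unfolding contains_pattern_length3 iso ..
qed

lemma contains_pattern_132:
  "contains_pattern Bs [1, 3, 2] \<longleftrightarrow>
   (\<exists>i0 i1 i2 x0 x1 x2. i0 < i1 \<and> i1 < i2 \<and> i2 < length Bs \<and>
      x0 \<in> Bs ! i0 \<and> x1 \<in> Bs ! i1 \<and> x2 \<in> Bs ! i2 \<and> x0 < x2 \<and> x2 < x1)"
proof -
  have iso: "((x0 < x1 \<longleftrightarrow> (1::nat) < 3) \<and> (x0 < x2 \<longleftrightarrow> (1::nat) < 2) \<and>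
      (x1 < x0 \<longleftrightarrow> (3::nat) < 1) \<and> (x1 < x2 \<longleftrightarrow> (3::nat) < 2) \<and>
      (x2 < x0 \<longleftrightarrow> (2::nat) < 1) \<and> (x2 < x1 \<longleftrightarrow> (2::nat) < 3)) \<longleftrightarrow> x0 < x2 \<and> x2 < x1"
    for x0 x1 x2 :: nat
    by auto
  show ?thesis unfolding contains_pattern_length3 iso ..
qed

definition block_content :: "nat list \<Rightarrow> nat multiset" where
  "block_content b = (\<Sum>i<length b. replicate_mset (b ! i) i)"

definition blocks :: "nat \<Rightarrow> nat \<Rightarrow> (nat \<Rightarrow> nat) \<Rightarrow> nat set list" where
  "blocks N k w = map (\<lambda>i. {v\<in>{1..N}. w v = i}) [0..<k]"

definition block_word :: "nat \<Rightarrow> nat set list \<Rightarrow> nat \<Rightarrow> nat" where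
  "block_word N Bs v = (if v \<in> {1..N} then THE i. i < length Bs \<and> v \<in> Bs ! i else 0)"

lemma count_block_content: "count (block_content b) i = (if i < length b then b ! i else 0)"
  by (simp add: block_content_def count_sum)

lemma length_blocks [simp]: "length (blocks N k w) = k"
  by (simp add: blocks_def)

lemma nth_blocks [simp]: "i < k \<Longrightarrow> blocks N k w ! i = {v\<in>{1..N}. w v = i}"
  by (simp add: blocks_def)

lemma words_block_content_iff:
  "w \<in> words N (block_content b) \<longleftrightarrow>
   (\<forall>v. v \<notin> {1..N} \<longrightarrow> w v = 0) \<and> (\<forall>v\<in>{1..N}. w v < length b) \<and>
   map card (blocks N (length b) w) = b"
  (is "_ \<longleftrightarrow> ?zero \<and> ?range \<and> ?cards")
proof -
  have count: "count (image_mset w (mset_set {1..N})) i = card {v\<in>{1..N}. w v = i}" for i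
    by (simp add: count_image_mset_mset_set)
  show ?thesis
  proof
    assume w: "w \<in> words N (block_content b)"
    then have content: "card {v\<in>{1..N}. w v = i} = (if i < length b then b ! i else 0)" for i
      using count[of i] count_block_content[of b i] unfolding words_def by simp
    have ?range
    proof
      fix v assume "v \<in> {1..N}"
      then have "card {u\<in>{1..N}. w u = w v} \<noteq> 0" by (subst card_0_eq) auto
      then show "w v < length b" using content[of "w v"] by presburger
    qed
    moreover have ?cards using content by (intro nth_equalityI) auto
    ultimately show "?zero \<and> ?range \<and> ?cards" using w unfolding words_def by blast
  next
    assume "?zero \<and> ?range \<and> ?cards"
    then have "card {v\<in>{1..N}. w v = i} = count (block_content b) i" for i
    proof (cases "i < length b")
      case True
      then show ?thesis using \<open>?zero \<and> ?range \<and> ?cards\<close> nth_map[of i "blocks N (length b) w" card]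
        by (simp add: count_block_content)
    qed (auto simp: count_block_content)
    then show "w \<in> words N (block_content b)"
      using \<open>?zero \<and> ?range \<and> ?cards\<close> count unfolding words_def by (auto intro: multiset_eqI)
  qed
qed

lemma ordered_set_partition_blocks:
  assumes range: "\<forall>v\<in>{1..N}. w v < length b" and cards: "map card (blocks N (length b) w) = b"
    and pos: "\<forall>x\<in>set b. 0 < x"
  shows "ordered_set_partition N (blocks N (length b) w)"
  unfolding ordered_set_partition_def
proof (intro conjI allI impI)
  fix i assume "i < length (blocks N (length b) w)"
  then have "card (blocks N (length b) w ! i) = b ! i" "0 < b ! i"
    using cards pos by (metis length_map nth_map, simp)
  then show "blocks N (length b) w ! i \<noteq> {}" by auto
next
  fix i j assume "i < length (blocks N (length b) w)" "j < length (blocks N (length b) w)" "i \<noteq> j"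
  then show "blocks N (length b) w ! i \<inter> blocks N (length b) w ! j = {}" by auto
next
  show "\<Union> (set (blocks N (length b) w)) = {1..N}"
    using range by (auto simp: blocks_def)
qed

lemma block_word_blocks:
  assumes "\<forall>v\<in>{1..N}. w v < k" "\<forall>v. v \<notin> {1..N} \<longrightarrow> w v = 0"
  shows "block_word N (blocks N k w) = w"
proof
  fix v show "block_word N (blocks N k w) v = w v"
  proof (cases "v \<in> {1..N}")
    case True
    then have "(THE i. i < k \<and> v \<in> blocks N k w ! i) = w v"
      using assms(1) by (intro the_equality) auto
    then show ?thesis using True unfolding block_word_def by simp
  next
    case False
    then show ?thesis using assms(2) unfolding block_word_def if_not_P[OF False] by simp
  qed
qed

lemma block_word_ordered_set_partition:
  assumes "ordered_set_partition N Bs"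
  shows "\<forall>v\<in>{1..N}. block_word N Bs v < length Bs" "blocks N (length Bs) (block_word N Bs) = Bs"
proof -
  have unique: "\<exists>!i. i < length Bs \<and> v \<in> Bs ! i" if "v \<in> {1..N}" for v
  proof -
    have "v \<in> \<Union> (set Bs)" using assms that unfolding ordered_set_partition_def by simp
    then have "\<exists>i<length Bs. v \<in> Bs ! i" by (auto simp: in_set_conv_nth)
    then show ?thesis using assms unfolding ordered_set_partition_def by blast
  qed
  have block: "block_word N Bs v < length Bs \<and> v \<in> Bs ! block_word N Bs v" if "v \<in> {1..N}" for v
    using theI'[OF unique[OF that]] that unfolding block_word_def by simp
  then show "\<forall>v\<in>{1..N}. block_word N Bs v < length Bs" by blast
  have "{v\<in>{1..N}. block_word N Bs v = i} = Bs ! i" if i: "i < length Bs" for i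
  proof -
    have "Bs ! i \<subseteq> {1..N}" using assms i unfolding ordered_set_partition_def by auto
    moreover have "block_word N Bs v = i \<longleftrightarrow> v \<in> Bs ! i" if "v \<in> {1..N}" for v
      using block[OF that] unique[OF that] i by blast
    ultimately show ?thesis by blast
  qed
  then show "blocks N (length Bs) (block_word N Bs) = Bs"
    by (intro nth_equalityI) auto
qed

lemma contains_123_blocks:
  assumes "\<forall>v\<in>{1..N}. w v < k"
  shows "contains_pattern (blocks N k w) [1, 2, 3] \<longleftrightarrow> contains_123 N w"
proof
  assume "contains_pattern (blocks N k w) [1, 2, 3]"
  then obtain i0 i1 i2 x0 x1 x2 where "i0 < i1" "i1 < i2" "i2 < k"
      "x0 \<in> blocks N k w ! i0" "x1 \<in> blocks N k w ! i1" "x2 \<in> blocks N k w ! i2"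
      "x0 < x1" "x1 < x2"
    unfolding contains_pattern_123 by auto
  then show "contains_123 N w"
    unfolding contains_123_def by (intro exI[of _ x0] exI[of _ x1] exI[of _ x2]) simp
next
  assume "contains_123 N w"
  then obtain p q r where pqr: "1 \<le> p" "p < q" "q < r" "r \<le> N" "w p < w q" "w q < w r"
    unfolding contains_123_def by blast
  then have "p \<in> {1..N}" "q \<in> {1..N}" "r \<in> {1..N}" by simp_all
  then have "p \<in> blocks N k w ! w p" "q \<in> blocks N k w ! w q" "r \<in> blocks N k w ! w r"
    "w r < length (blocks N k w)" using assms by simp_all
  then show "contains_pattern (blocks N k w) [1, 2, 3]"
    unfolding contains_pattern_123 using pqr by blast
qed

lemma contains_132_blocks:
  assumes "\<forall>v\<in>{1..N}. w v < k"
  shows "contains_pattern (blocks N k w) [1, 3, 2] \<longleftrightarrow> contains_132 N w"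
proof
  assume "contains_pattern (blocks N k w) [1, 3, 2]"
  then obtain i0 i1 i2 x0 x1 x2 where "i0 < i1" "i1 < i2" "i2 < k"
      "x0 \<in> blocks N k w ! i0" "x1 \<in> blocks N k w ! i1" "x2 \<in> blocks N k w ! i2"
      "x0 < x2" "x2 < x1"
    unfolding contains_pattern_132 by auto
  then show "contains_132 N w"
    unfolding contains_132_def by (intro exI[of _ x0] exI[of _ x2] exI[of _ x1]) simp
next
  assume "contains_132 N w"
  then obtain p q r where pqr: "1 \<le> p" "p < q" "q < r" "r \<le> N" "w p < w r" "w r < w q"
    unfolding contains_132_def by blast
  then have "p \<in> {1..N}" "q \<in> {1..N}" "r \<in> {1..N}" by simp_all
  then have "p \<in> blocks N k w ! w p" "q \<in> blocks N k w ! w q" "r \<in> blocks N k w ! w r"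
    "w q < length (blocks N k w)" using assms by simp_all
  then show "contains_pattern (blocks N k w) [1, 3, 2]"
    unfolding contains_pattern_132 using pqr by blast
qed

lemma op_count_eq_card_words:
  assumes pos: "\<forall>x\<in>set b. 0 < x"
  defines "N \<equiv> sum_list b"
  shows "op_count b rho =
         card {w \<in> words N (block_content b). \<not> contains_pattern (blocks N (length b) w) rho}"
  unfolding op_count_def N_def[symmetric]
proof -
  let ?W = "{w \<in> words N (block_content b). \<not> contains_pattern (blocks N (length b) w) rho}"
  let ?P = "{Bs. ordered_set_partition N Bs \<and> map card Bs = b \<and> avoids_pattern Bs rho}"
  have "bij_betw (blocks N (length b)) ?W ?P"
  proof (rule bij_betw_byWitness[where f' = "block_word N"])
    show "\<forall>w\<in>?W. block_word N (blocks N (length b) w) = w"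
      by (auto simp: words_block_content_iff intro: block_word_blocks)
    show "\<forall>Bs\<in>?P. blocks N (length b) (block_word N Bs) = Bs"
      using block_word_ordered_set_partition(2) by force
    show "blocks N (length b) ` ?W \<subseteq> ?P"
      using pos
      by (auto simp: words_block_content_iff avoids_pattern_def intro: ordered_set_partition_blocks)
    show "block_word N ` ?P \<subseteq> ?W"
    proof
      fix w assume "w \<in> block_word N ` ?P"
      then obtain Bs where Bs: "ordered_set_partition N Bs" "map card Bs = b" "avoids_pattern Bs rho"
          "w = block_word N Bs"
        by blast
      have "length Bs = length b" using Bs(2) by auto
      then have "blocks N (length b) w = Bs" "\<forall>v\<in>{1..N}. w v < length b"
        using block_word_ordered_set_partition[OF Bs(1)] Bs(4) by auto
      moreover have "\<forall>v. v \<notin> {1..N} \<longrightarrow> w v = 0" using Bs(4) by (simp add: block_word_def)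
      ultimately show "w \<in> ?W" using Bs(2,3) by (simp add: words_block_content_iff avoids_pattern_def)
    qed
  qed
  then show "card ?P = card ?W" by (rule bij_betw_same_card[symmetric])
qed

theorem theorem7:
  fixes b :: "nat list"
  assumes "\<forall>x \<in> set b. 0 < x"
  shows "op_count b [1, 2, 3] = op_count b [1, 3, 2]"
proof -
  define N where "N = sum_list b"
  let ?W = "words N (block_content b)"
  have range: "\<forall>v\<in>{1..N}. w v < length b" if "w \<in> ?W" for w
    using that by (simp add: words_block_content_iff)
  have "op_count b [1, 2, 3] = card {w \<in> ?W. \<not> contains_pattern (blocks N (length b) w) [1, 2, 3]}"
    using op_count_eq_card_words[OF assms] unfolding N_def .
  also have "\<dots> = card {w \<in> ?W. \<not> contains_123 N w}"
    using contains_123_blocks[OF range] by (metis (lifting))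
  also have "\<dots> = card {w \<in> ?W. \<not> contains_132 N w}"
    by (rule card_words_not_contains_123_eq_132)
  also have "\<dots> = card {w \<in> ?W. \<not> contains_pattern (blocks N (length b) w) [1, 3, 2]}"
    using contains_132_blocks[OF range] by (metis (lifting))
  also have "\<dots> = op_count b [1, 3, 2]"
    using op_count_eq_card_words[OF assms] unfolding N_def by simp
  finally show ?thesis .
qed

end
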